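(* Let $n,m_A,m_B>0$ be integers, $A,B$ quantum systems of dimensions $m_A,m_B$, and $\psi_{AB}$ a bipartite state with $\psi_A=\mathrm{id}_{m_A}/m_A$ and $\psi_B=\mathrm{id}_{m_B}/m_B$; let $\rho=\rho(\psi_{AB})$ and let $\mathcal{T}:\mathcal{M}(B^n)\to\mathcal{M}(A^n)$ be the Markov super-operator with respect to $\psi_{AB}^{\otimes n}$. Then for every $Q\in\mathcal{M}(B^n)$ and $S\subseteq[n]$, $$\|\mathcal{T}(Q[S])\|'_2\le\rho^{|S|}\|Q[S]\|'_2.$$
   Context: On $\mathcal{M}(A^n)$ use $\langle X,Y\rangle=\frac1{m_A^n}\mathrm{Tr}X^\dagger Y$ and on $\mathcal{M}(B^n)$ use $\frac1{m_B^n}\mathrm{Tr}X^\dagger Y$; $\|X\|'_2=\langle X,X\rangle^{1/2}$. The Markov super-operator is defined by $\mathrm{Tr}((M^\dagger\otimes Q)\psi_{AB}^{\otimes n})=\langle M,\mathcal{T}(Q)\rangle$ for all $M,Q$. Maximal correlation: $\rho(\psi_{AB})=\sup\{|\mathrm{Tr}((P^\dagger\otimes Q)\psi_{AB})|:\mathrm{Tr}P=\mathrm{Tr}Q=0,\ \tfrac1{m_A}\mathrm{Tr}P^\dagger P=\tfrac1{m_B}\mathrm{Tr}Q^\dagger Q=1\}$. A standard orthonormal basis of $\mathcal{M}_k$ is an orthonormal basis (for $\frac1k\mathrm{Tr}X^\dagger Y$) of Hermitian matrices $\mathcal{B}_0=\mathrm{id}_k,\mathcal{B}_1,\ldots,\mathcal{B}_{k^2-1}$;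 with $\mathcal{B}_\sigma=\bigotimes_i\mathcal{B}_{\sigma_i}$ and $Q=\sum_\sigma\widehat Q(\sigma)\mathcal{B}_\sigma$, the Efron–Stein component is $Q[S]=\sum_{\sigma:\{i:\sigma_i\ne0\}=S}\widehat Q(\sigma)\mathcal{B}_\sigma$ (basis-independent). *)

theory Defs
  imports Complex_Main
begin

text \<open>Operators on an n-fold system of local dimension m are represented as functions
  on index lists (length n, entries below m); only values on these index sets matter.\<close>

type_synonym nmat = "nat list \<Rightarrow> nat list \<Rightarrow> complex"
type_synonym smat = "nat \<Rightarrow> nat \<Rightarrow> complex"
type_synonym bmat = "nat \<times> nat \<Rightarrow> nat \<times> nat \<Rightarrow> complex"

definition idx :: "nat \<Rightarrow> nat \<Rightarrow> nat list set" where
  "idx m n = {xs. length xs = n \<and> (\<forall>x\<in>set xs. x < m)}"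

definition ninner :: "nat \<Rightarrow> nat \<Rightarrow> nmat \<Rightarrow> nmat \<Rightarrow> complex" where
  "ninner m n X Y = (1 / of_nat (m ^ n)) *
     (\<Sum>i\<in>idx m n. \<Sum>j\<in>idx m n. cnj (X j i) * Y j i)"

definition nnorm2 :: "nat \<Rightarrow> nat \<Rightarrow> nmat \<Rightarrow> real" where
  "nnorm2 m n X = sqrt (Re (ninner m n X X))"

definition str :: "nat \<Rightarrow> smat \<Rightarrow> complex" where
  "str k P = (\<Sum>i<k. P i i)"

definition sinner :: "nat \<Rightarrow> smat \<Rightarrow> smat \<Rightarrow> complex" where
  "sinner k X Y = (1 / of_nat k) * (\<Sum>i<k. \<Sum>j<k. cnj (X j i) * Y j i)"

definition is_state :: "nat \<Rightarrow> nat \<Rightarrow> bmat \<Rightarrow> bool" where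
  "is_state mA mB \<psi> \<longleftrightarrow>
     (\<forall>x\<in>{..<mA}\<times>{..<mB}. \<forall>y\<in>{..<mA}\<times>{..<mB}. \<psi> x y = cnj (\<psi> y x)) \<and>
     (\<forall>v :: nat \<times> nat \<Rightarrow> complex.
        0 \<le> Re (\<Sum>x\<in>{..<mA}\<times>{..<mB}. \<Sum>y\<in>{..<mA}\<times>{..<mB}. cnj (v x) * \<psi> x y * v y)) \<and>
     (\<Sum>x\<in>{..<mA}\<times>{..<mB}. \<psi> x x) = 1"

definition marginal_A_maxmixed :: "nat \<Rightarrow> nat \<Rightarrow> bmat \<Rightarrow> bool" where
  "marginal_A_maxmixed mA mB \<psi> \<longleftrightarrow>
     (\<forall>a<mA. \<forall>a'<mA. (\<Sum>b<mB. \<psi> (a, b) (a', b)) = (if a = a' then 1 / of_nat mA else 0))"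

definition marginal_B_maxmixed :: "nat \<Rightarrow> nat \<Rightarrow> bmat \<Rightarrow> bool" where
  "marginal_B_maxmixed mA mB \<psi> \<longleftrightarrow>
     (\<forall>b<mB. \<forall>b'<mB. (\<Sum>a<mA. \<psi> (a, b) (a, b')) = (if b = b' then 1 / of_nat mB else 0))"

text \<open>entries of psi^{tensor n}, indexed by ((as,bs),(as',bs'))\<close>
definition psi_tensor :: "nat \<Rightarrow> bmat \<Rightarrow> nat list \<times> nat list \<Rightarrow> nat list \<times> nat list \<Rightarrow> complex" where
  "psi_tensor n \<psi> x y = (\<Prod>i<n. \<psi> (fst x ! i, snd x ! i) (fst y ! i, snd y ! i))"

text \<open>Tr ((M^dagger tensor Q) psi^{tensor n})\<close>
definition pair_trace :: "nat \<Rightarrow> nat \<Rightarrow> nat \<Rightarrow> bmat \<Rightarrow> nmat \<Rightarrow> nmat \<Rightarrow> complex" where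
  "pair_trace mA mB n \<psi> M Q =
     (\<Sum>as\<in>idx mA n. \<Sum>bs\<in>idx mB n. \<Sum>as'\<in>idx mA n. \<Sum>bs'\<in>idx mB n.
        cnj (M as' as) * Q bs bs' * psi_tensor n \<psi> (as', bs') (as, bs))"

definition is_markov_op :: "nat \<Rightarrow> nat \<Rightarrow> nat \<Rightarrow> bmat \<Rightarrow> (nmat \<Rightarrow> nmat) \<Rightarrow> bool" where
  "is_markov_op mA mB n \<psi> T \<longleftrightarrow>
     (\<forall>M Q. pair_trace mA mB n \<psi> M Q = ninner mA n M (T Q))"

text \<open>Tr ((P^dagger tensor Q) psi) for single-system P, Q\<close>
definition corr :: "nat \<Rightarrow> nat \<Rightarrow> bmat \<Rightarrow> smat \<Rightarrow> smat \<Rightarrow> complex" where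
  "corr mA mB \<psi> P Q =
     (\<Sum>a<mA. \<Sum>b<mB. \<Sum>a'<mA. \<Sum>b'<mB. cnj (P a' a) * Q b b' * \<psi> (a', b') (a, b))"

text \<open>maximal correlation; the supremum of the empty set (m_A = 1 or m_B = 1) is taken as 0\<close>
definition maxcorr :: "nat \<Rightarrow> nat \<Rightarrow> bmat \<Rightarrow> real" where
  "maxcorr mA mB \<psi> = Sup (insert 0 {cmod (corr mA mB \<psi> P Q) | P Q.
      str mA P = 0 \<and> str mB Q = 0 \<and> sinner mA P P = 1 \<and> sinner mB Q Q = 1})"

definition std_onb :: "nat \<Rightarrow> (nat \<Rightarrow> smat) \<Rightarrow> bool" where
  "std_onb k Bs \<longleftrightarrow>
     (\<forall>i<k. \<forall>j<k. Bs 0 i j = (if i = j then 1 else 0)) \<and>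
     (\<forall>s<k^2. \<forall>i<k. \<forall>j<k. Bs s i j = cnj (Bs s j i)) \<and>
     (\<forall>s<k^2. \<forall>t<k^2. sinner k (Bs s) (Bs t) = (if s = t then 1 else 0))"

definition basis_prod :: "(nat \<Rightarrow> smat) \<Rightarrow> nat list \<Rightarrow> nmat" where
  "basis_prod Bs \<sigma> bs bs' = (\<Prod>i<length \<sigma>. Bs (\<sigma> ! i) (bs ! i) (bs' ! i))"

definition fourier_coeff :: "nat \<Rightarrow> nat \<Rightarrow> (nat \<Rightarrow> smat) \<Rightarrow> nmat \<Rightarrow> nat list \<Rightarrow> complex" where
  "fourier_coeff k n Bs Q = (THE c. (\<forall>\<sigma>. \<sigma> \<notin> idx (k^2) n \<longrightarrow> c \<sigma> = 0) \<and>
      (\<forall>bs\<in>idx k n. \<forall>bs'\<in>idx k n.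
         Q bs bs' = (\<Sum>\<sigma>\<in>idx (k^2) n. c \<sigma> * basis_prod Bs \<sigma> bs bs')))"

text \<open>Efron-Stein component Q[S] (coordinates 0..n-1)\<close>
definition es_comp :: "nat \<Rightarrow> nat \<Rightarrow> (nat \<Rightarrow> smat) \<Rightarrow> nmat \<Rightarrow> nat set \<Rightarrow> nmat" where
  "es_comp k n Bs Q S = (\<lambda>bs bs'.
     \<Sum>\<sigma>\<in>{\<sigma>\<in>idx (k^2) n. {i. i < n \<and> \<sigma> ! i \<noteq> 0} = S}.
        fourier_coeff k n Bs Q \<sigma> * basis_prod Bs \<sigma> bs bs')"

end

theory Submission
  imports Defs
begin

text \<open>Expand Q[S] in the product basis: the i-th factor of B_sigma is a traceless basis
  element if i \<in> S and the identity otherwise. The defining identity of T forces it to act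
  factorwise through the Markov operator T_1 of a single copy. Since psi_A is maximally mixed,
  T_1 fixes the identity; since psi_B is maximally mixed, T_1 maps traceless operators to
  traceless ones, and testing the definition of rho against P = T_1 Y gives
  ||T_1 Y|| \<le> rho ||Y|| for traceless Y. Tensorizing these coordinatewise bounds yields
  ||T(Q[S])||^2 \<le> rho^(2|S|) \<Sum>|c_sigma|^2, and by orthonormality of the product basis the
  last sum is ||Q[S]||^2.\<close>

section \<open>Lists with prescribed coordinate ranges\<close>

definition lists_pi :: "(nat \<Rightarrow> 'a set) \<Rightarrow> nat \<Rightarrow> 'a list set" where
  "lists_pi D n = {xs. length xs = n \<and> (\<forall>i<n. xs ! i \<in> D i)}"

lemma lists_pi_0 [simp]: "lists_pi D 0 = {[]}"
  by (auto simp: lists_pi_def)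

lemma lists_pi_Suc:
  "lists_pi D (Suc n) = (\<lambda>(a, xs). a # xs) ` (D 0 \<times> lists_pi (\<lambda>i. D (Suc i)) n)"
proof (rule set_eqI, rule iffI)
  fix ys assume "ys \<in> lists_pi D (Suc n)"
  then show "ys \<in> (\<lambda>(a, xs). a # xs) ` (D 0 \<times> lists_pi (\<lambda>i. D (Suc i)) n)"
    by (cases ys) (auto simp: lists_pi_def image_iff)
qed (auto simp: lists_pi_def less_Suc_eq_0_disj)

lemma sum_lists_pi_Suc:
  "(\<Sum>xs\<in>lists_pi D (Suc n). f xs) = (\<Sum>a\<in>D 0. \<Sum>xs\<in>lists_pi (\<lambda>i. D (Suc i)) n. f (a # xs))"
proof -
  have inj: "inj_on (\<lambda>(a, xs). a # xs) (D 0 \<times> lists_pi (\<lambda>i. D (Suc i)) n)"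
    by (auto simp: inj_on_def)
  show ?thesis
    unfolding lists_pi_Suc sum.reindex[OF inj] by (simp add: sum.cartesian_product split_beta)
qed

lemma finite_lists_pi: "(\<And>i. finite (D i)) \<Longrightarrow> finite (lists_pi D n)"
  by (induction n arbitrary: D) (simp_all add: lists_pi_Suc)

lemma idx_eq_lists_pi: "idx m n = lists_pi (\<lambda>_. {..<m}) n"
  by (auto simp: idx_def lists_pi_def all_set_conv_all_nth)

lemma finite_idx [simp]: "finite (idx m n)"
  by (simp add: idx_eq_lists_pi finite_lists_pi)

lemma sum_idx_Suc: "(\<Sum>xs\<in>idx m (Suc n). f xs) = (\<Sum>xs\<in>idx m n. \<Sum>a<m. f (a # xs))"
  by (simp add: idx_eq_lists_pi sum_lists_pi_Suc sum.swap[of _ "{..<m}"])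

lemma sum_prod_lists_pi:
  "(\<Sum>xs\<in>lists_pi D n. \<Prod>i<n. g i (xs ! i)) = (\<Prod>i<n. \<Sum>x\<in>D i. (g i x :: 'b::comm_semiring_1))"
proof (induction n arbitrary: D g)
  case (Suc n)
  have "(\<Sum>xs\<in>lists_pi D (Suc n). \<Prod>i<Suc n. g i (xs ! i))
      = (\<Sum>a\<in>D 0. g 0 a * (\<Sum>xs\<in>lists_pi (\<lambda>i. D (Suc i)) n. \<Prod>i<n. g (Suc i) (xs ! i)))"
    by (simp add: sum_lists_pi_Suc prod.lessThan_Suc_shift sum_distrib_left del: prod.lessThan_Suc)
  also have "\<dots> = (\<Prod>i<Suc n. \<Sum>x\<in>D i. g i x)"
    by (simp add: Suc.IH[where D="\<lambda>i. D (Suc i)" and g="\<lambda>i. g (Suc i)"]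
        prod.lessThan_Suc_shift sum_distrib_right del: prod.lessThan_Suc)
  finally show ?case .
qed simp

lemma sum_prod_idx2:
  "(\<Sum>bs\<in>idx k n. \<Sum>bs'\<in>idx k n. \<Prod>i<n. f i (bs ! i) (bs' ! i))
    = (\<Prod>i<n. \<Sum>b<k. \<Sum>b'<k. (f i b b' :: 'a::comm_semiring_1))"
proof -
  have "(\<Sum>bs'\<in>idx k n. \<Prod>i<n. f i (bs ! i) (bs' ! i)) = (\<Prod>i<n. \<Sum>b'<k. f i (bs ! i) b')" for bs
    unfolding idx_eq_lists_pi by (rule sum_prod_lists_pi)
  then show ?thesis
    unfolding idx_eq_lists_pi by (simp add: sum_prod_lists_pi[where g="\<lambda>i b. \<Sum>b'<k. f i b b'"])
qed

section \<open>Operators expanded in a product basis\<close>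

definition frob_sq :: "nat \<Rightarrow> smat \<Rightarrow> real" where
  "frob_sq k X = (\<Sum>i<k. \<Sum>j<k. (cmod (X j i))\<^sup>2)"

definition nfrob_sq :: "nat \<Rightarrow> nat \<Rightarrow> nmat \<Rightarrow> real" where
  "nfrob_sq m n X = (\<Sum>i\<in>idx m n. \<Sum>j\<in>idx m n. (cmod (X j i))\<^sup>2)"

lemma cnj_mult_self: "cnj z * z = complex_of_real ((cmod z)\<^sup>2)"
  by (metis complex_norm_square mult.commute)

lemma frob_sq_nonneg: "0 \<le> frob_sq k X"
  by (simp add: frob_sq_def sum_nonneg)

lemma frob_sq_eq_0_iff: "frob_sq k X = 0 \<longleftrightarrow> (\<forall>i<k. \<forall>j<k. X j i = 0)"
  by (auto simp: frob_sq_def sum_nonneg sum_nonneg_eq_0_iff)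

lemma frob_sq_scale: "frob_sq k (\<lambda>i j. complex_of_real r * X i j) = r\<^sup>2 * frob_sq k X"
  by (simp add: frob_sq_def norm_mult power_mult_distrib sum_distrib_left)

lemma sinner_self: "sinner k X X = complex_of_real (frob_sq k X / real k)"
  by (simp add: sinner_def frob_sq_def cnj_mult_self)

lemma frob_sq_eq_sinner: "complex_of_real (frob_sq k X) = of_nat k * sinner k X X"
  by (cases "k = 0") (simp_all add: sinner_self frob_sq_def)

lemma nnorm2_eq: "nnorm2 m n X = sqrt (nfrob_sq m n X / real m ^ n)"
proof -
  have "(\<Sum>i\<in>idx m n. \<Sum>j\<in>idx m n. cnj (X j i) * X j i) = complex_of_real (nfrob_sq m n X)"
    by (simp add: nfrob_sq_def cnj_mult_self)
  then show ?thesis by (simp add: nnorm2_def ninner_def)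
qed

lemma nfrob_sq_Suc:
  "nfrob_sq m (Suc n) X = (\<Sum>i\<in>idx m n. \<Sum>j\<in>idx m n. frob_sq m (\<lambda>a b. X (a # j) (b # i)))"
  unfolding nfrob_sq_def frob_sq_def sum_idx_Suc
  by (intro sum.cong refl) (rule sum.swap)

lemma nfrob_sq_cong:
  "(\<And>xs ys. xs \<in> idx m n \<Longrightarrow> ys \<in> idx m n \<Longrightarrow> X xs ys = Y xs ys) \<Longrightarrow> nfrob_sq m n X = nfrob_sq m n Y"
  by (simp add: nfrob_sq_def)

definition tensor_series ::
    "(nat \<Rightarrow> nat set) \<Rightarrow> (nat \<Rightarrow> nat \<Rightarrow> smat) \<Rightarrow> (nat list \<Rightarrow> complex) \<Rightarrow> nat \<Rightarrow> nmat" where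
  "tensor_series D G c n =
    (\<lambda>xs ys. \<Sum>\<sigma>\<in>lists_pi D n. c \<sigma> * (\<Prod>i<n. G i (\<sigma> ! i) (xs ! i) (ys ! i)))"

lemma tensor_series_Cons:
  "tensor_series D G c (Suc n) (a # xs) (b # ys) =
    (\<Sum>s\<in>D 0. tensor_series (\<lambda>i. D (Suc i)) (\<lambda>i. G (Suc i)) (\<lambda>\<tau>. c (s # \<tau>)) n xs ys * G 0 s a b)"
  unfolding tensor_series_def sum_lists_pi_Suc sum_distrib_right
  by (intro sum.cong refl) (simp add: prod.lessThan_Suc_shift ac_simps del: prod.lessThan_Suc)

lemma nfrob_sq_tensor_series_le:
  assumes "\<And>i. finite (D i)" and "\<And>i. 0 \<le> lam i"
    and "\<And>i d. frob_sq m (\<lambda>a b. \<Sum>s\<in>D i. d s * G i s a b)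
      \<le> real m * lam i * (\<Sum>s\<in>D i. (cmod (d s))\<^sup>2)"
  shows "nfrob_sq m n (tensor_series D G c n)
    \<le> real m ^ n * (\<Prod>i<n. lam i) * (\<Sum>\<sigma>\<in>lists_pi D n. (cmod (c \<sigma>))\<^sup>2)"
  using assms
proof (induction n arbitrary: D G lam c)
  case 0
  then show ?case by (simp add: nfrob_sq_def tensor_series_def idx_eq_lists_pi)
next
  case (Suc n)
  define Y where "Y s = tensor_series (\<lambda>i. D (Suc i)) (\<lambda>i. G (Suc i)) (\<lambda>\<tau>. c (s # \<tau>)) n" for s
  have "nfrob_sq m (Suc n) (tensor_series D G c (Suc n))
      = (\<Sum>i\<in>idx m n. \<Sum>j\<in>idx m n. frob_sq m (\<lambda>a b. \<Sum>s\<in>D 0. Y s j i * G 0 s a b))"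
    by (simp add: nfrob_sq_Suc tensor_series_Cons Y_def)
  also have "\<dots> \<le> (\<Sum>i\<in>idx m n. \<Sum>j\<in>idx m n. real m * lam 0 * (\<Sum>s\<in>D 0. (cmod (Y s j i))\<^sup>2))"
    by (intro sum_mono Suc.prems(3))
  also have "\<dots> = real m * lam 0 * (\<Sum>s\<in>D 0. nfrob_sq m n (Y s))"
    by (simp add: nfrob_sq_def sum_distrib_left sum.swap[of _ "D 0"])
  also have "\<dots> \<le> real m * lam 0 * (\<Sum>s\<in>D 0. real m ^ n * (\<Prod>i<n. lam (Suc i))
      * (\<Sum>\<tau>\<in>lists_pi (\<lambda>i. D (Suc i)) n. (cmod (c (s # \<tau>)))\<^sup>2))"
    unfolding Y_def using Suc.prems by (intro mult_left_mono sum_mono Suc.IH) auto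
  also have "\<dots> = real m ^ Suc n * (\<Prod>i<Suc n. lam i) * (\<Sum>\<sigma>\<in>lists_pi D (Suc n). (cmod (c \<sigma>))\<^sup>2)"
    by (simp add: sum_lists_pi_Suc prod.lessThan_Suc_shift sum_distrib_left ac_simps
        del: prod.lessThan_Suc)
  finally show ?case .
qed

lemma nfrob_sq_tensor_series_eq:
  assumes "\<And>i. finite (D i)"
    and "\<And>i d. frob_sq m (\<lambda>a b. \<Sum>s\<in>D i. d s * G i s a b) = real m * (\<Sum>s\<in>D i. (cmod (d s))\<^sup>2)"
  shows "nfrob_sq m n (tensor_series D G c n) = real m ^ n * (\<Sum>\<sigma>\<in>lists_pi D n. (cmod (c \<sigma>))\<^sup>2)"
  using assms
proof (induction n arbitrary: D G c)
  case 0
  then show ?case by (simp add: nfrob_sq_def tensor_series_def idx_eq_lists_pi)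
next
  case (Suc n)
  define Y where "Y s = tensor_series (\<lambda>i. D (Suc i)) (\<lambda>i. G (Suc i)) (\<lambda>\<tau>. c (s # \<tau>)) n" for s
  have "nfrob_sq m (Suc n) (tensor_series D G c (Suc n))
      = (\<Sum>i\<in>idx m n. \<Sum>j\<in>idx m n. frob_sq m (\<lambda>a b. \<Sum>s\<in>D 0. Y s j i * G 0 s a b))"
    by (simp add: nfrob_sq_Suc tensor_series_Cons Y_def)
  also have "\<dots> = real m * (\<Sum>s\<in>D 0. nfrob_sq m n (Y s))"
    by (simp add: Suc.prems(2) nfrob_sq_def sum_distrib_left sum.swap[of _ "D 0"])
  also have "\<dots> = real m ^ Suc n * (\<Sum>\<sigma>\<in>lists_pi D (Suc n). (cmod (c \<sigma>))\<^sup>2)"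
    unfolding Y_def using Suc.prems
    by (simp add: Suc.IH sum_lists_pi_Suc sum_distrib_left ac_simps)
  finally show ?case .
qed

section \<open>Orthonormal bases of a single system\<close>

lemma sinner_sum_left:
  "sinner k (\<lambda>i j. \<Sum>s\<in>D. d s * X s i j) Y = (\<Sum>s\<in>D. cnj (d s) * sinner k (X s) Y)"
  by (simp add: sinner_def cnj_sum sum_distrib_left sum_distrib_right sum.swap[where B=D] ac_simps)

lemma sinner_sum_right:
  "sinner k X (\<lambda>i j. \<Sum>s\<in>D. d s * Y s i j) = (\<Sum>s\<in>D. d s * sinner k X (Y s))"
  by (simp add: sinner_def sum_distrib_left sum.swap[where B=D] ac_simps)

lemma str_sum: "str k (\<lambda>i j. \<Sum>s\<in>D. d s * Y s i j) = (\<Sum>s\<in>D. d s * str k (Y s))"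
  by (simp add: str_def sum_distrib_left sum.swap[where B=D])

lemma frob_sq_std_onb_expansion:
  assumes onb: "std_onb k Bs" and D: "D \<subseteq> {..<k^2}"
  shows "frob_sq k (\<lambda>i j. \<Sum>s\<in>D. d s * Bs s i j) = real k * (\<Sum>s\<in>D. (cmod (d s))\<^sup>2)"
proof -
  have fin: "finite D" using D finite_subset by blast
  have orth: "sinner k (Bs s) (Bs t) = (if s = t then 1 else 0)" if "s \<in> D" "t \<in> D" for s t
    using onb that D unfolding std_onb_def by blast
  have "(\<Sum>t\<in>D. d t * sinner k (Bs s) (Bs t)) = (\<Sum>t\<in>D. if t = s then d s else 0)"
    if "s \<in> D" for s
    using that by (intro sum.cong) (auto simp: orth)
  then have "(\<Sum>t\<in>D. d t * sinner k (Bs s) (Bs t)) = d s" if "s \<in> D" for s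
    using that fin by simp
  then have "sinner k (\<lambda>i j. \<Sum>s\<in>D. d s * Bs s i j) (\<lambda>i j. \<Sum>s\<in>D. d s * Bs s i j)
      = (\<Sum>s\<in>D. cnj (d s) * d s)"
    by (simp add: sinner_sum_left sinner_sum_right)
  then have "complex_of_real (frob_sq k (\<lambda>i j. \<Sum>s\<in>D. d s * Bs s i j))
      = complex_of_real (real k * (\<Sum>s\<in>D. (cmod (d s))\<^sup>2))"
    by (simp add: frob_sq_eq_sinner cnj_mult_self)
  then show ?thesis by (simp only: of_real_eq_iff)
qed

lemma std_onb_identity: "std_onb k Bs \<Longrightarrow> i < k \<Longrightarrow> j < k \<Longrightarrow> Bs 0 i j = (if i = j then 1 else 0)"
  unfolding std_onb_def by blast

lemma str_std_onb_nonidentity: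
  assumes onb: "std_onb k Bs" and s: "s \<in> {1..<k^2}"
  shows "str k (Bs s) = 0"
proof -
  have k: "k > 0" using s by (cases k) auto
  have "sinner k (Bs 0) (Bs s) = 0" using onb s k unfolding std_onb_def by auto
  moreover have "sinner k (Bs 0) (Bs s) = str k (Bs s) / of_nat k"
  proof -
    have "(\<Sum>j<k. cnj (Bs 0 j i) * Bs s j i) = (\<Sum>j<k. if j = i then Bs s i i else 0)"
      if "i < k" for i
      using that by (intro sum.cong) (auto simp: std_onb_identity[OF onb])
    then have "(\<Sum>j<k. cnj (Bs 0 j i) * Bs s j i) = Bs s i i" if "i < k" for i
      using that by simp
    then show ?thesis by (simp add: sinner_def str_def)
  qed
  ultimately show ?thesis using k by simp
qed

section \<open>Maximal correlation\<close>

lemma norm_entry_le_of_sinner_self_eq_1: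
  assumes "sinner m P P = 1" and "a < m" and "a' < m"
  shows "cmod (P a' a) \<le> real m"
proof -
  have "complex_of_real (frob_sq m P / real m) = 1"
    using assms(1) by (simp only: sinner_self)
  then have "frob_sq m P / real m = 1"
    by (simp only: of_real_eq_1_iff)
  then have frob: "frob_sq m P = real m" and "real m \<ge> 1"
    using assms(2) by (simp_all add: field_simps)
  have "(cmod (P a' a))\<^sup>2 \<le> (\<Sum>j<m. (cmod (P j a))\<^sup>2)"
    by (rule member_le_sum) (use assms in auto)
  also have "\<dots> \<le> frob_sq m P"
    unfolding frob_sq_def by (rule member_le_sum[where f="\<lambda>i. \<Sum>j<m. (cmod (P j i))\<^sup>2"])
      (use assms in \<open>auto intro: sum_nonneg\<close>)
  also have "\<dots> \<le> (real m)\<^sup>2"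
    using frob \<open>real m \<ge> 1\<close> by (simp add: power2_eq_square)
  finally show ?thesis by (rule power2_le_imp_le) simp
qed

lemma norm_corr_le_of_sinner_self_eq_1:
  assumes "sinner m P P = 1" and "sinner k Q Q = 1"
  shows "cmod (corr m k \<psi> P Q)
    \<le> real m * real k * (\<Sum>a<m. \<Sum>b<k. \<Sum>a'<m. \<Sum>b'<k. cmod (\<psi> (a', b') (a, b)))"
proof -
  have "cmod (corr m k \<psi> P Q)
      \<le> (\<Sum>a<m. \<Sum>b<k. \<Sum>a'<m. \<Sum>b'<k. cmod (P a' a) * cmod (Q b b') * cmod (\<psi> (a', b') (a, b)))"
    unfolding corr_def by (intro order_trans[OF norm_sum] sum_mono) (simp add: norm_mult)
  also have "\<dots> \<le> (\<Sum>a<m. \<Sum>b<k. \<Sum>a'<m. \<Sum>b'<k. real m * real k * cmod (\<psi> (a', b') (a, b)))"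
    using norm_entry_le_of_sinner_self_eq_1[OF assms(1)]
      norm_entry_le_of_sinner_self_eq_1[OF assms(2)]
    by (intro sum_mono mult_right_mono mult_mono) auto
  finally show ?thesis by (simp add: sum_distrib_left)
qed

lemma
  shows maxcorr_nonneg: "0 \<le> maxcorr m k \<psi>"
    and norm_corr_le_maxcorr: "str m P = 0 \<Longrightarrow> str k Q = 0 \<Longrightarrow> sinner m P P = 1 \<Longrightarrow> sinner k Q Q = 1
      \<Longrightarrow> cmod (corr m k \<psi> P Q) \<le> maxcorr m k \<psi>"
proof -
  \<comment> \<open>The normalisation bounds the entries of P and Q and psi has finitely many entries,
    so no positivity of psi is needed.\<close>
  have bdd: "bdd_above (insert 0 {cmod (corr m k \<psi> P Q) | P Q.
      str m P = 0 \<and> str k Q = 0 \<and> sinner m P P = 1 \<and> sinner k Q Q = 1})"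
    using norm_corr_le_of_sinner_self_eq_1 unfolding bdd_above_def
    by (intro exI[of _ "real m * real k * (\<Sum>a<m. \<Sum>b<k. \<Sum>a'<m. \<Sum>b'<k. cmod (\<psi> (a', b') (a, b)))"])
      (auto intro!: mult_nonneg_nonneg sum_nonneg)
  show "0 \<le> maxcorr m k \<psi>"
    unfolding maxcorr_def by (rule cSup_upper[OF _ bdd]) simp
  show "cmod (corr m k \<psi> P Q) \<le> maxcorr m k \<psi>"
    if "str m P = 0" "str k Q = 0" "sinner m P P = 1" "sinner k Q Q = 1"
    unfolding maxcorr_def by (rule cSup_upper[OF _ bdd]) (use that in blast)
qed

lemma corr_scale:
  "corr m k \<psi> (\<lambda>i j. complex_of_real r * P i j) (\<lambda>i j. complex_of_real t * Q i j)
    = complex_of_real (r * t) * corr m k \<psi> P Q"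
  by (simp add: corr_def sum_distrib_left ac_simps)

lemma norm_corr_le_maxcorr_frob:
  assumes "str m P = 0" and "str k Q = 0"
  shows "cmod (corr m k \<psi> P Q)
    \<le> maxcorr m k \<psi> * sqrt (frob_sq m P / real m) * sqrt (frob_sq k Q / real k)"
proof (cases "frob_sq m P = 0 \<or> frob_sq k Q = 0")
  case True
  then have "corr m k \<psi> P Q = 0"
    by (auto simp: frob_sq_eq_0_iff corr_def)
  then show ?thesis
    by (simp add: maxcorr_nonneg frob_sq_nonneg)
next
  case False
  define p where "p = sqrt (frob_sq m P / real m)"
  define q where "q = sqrt (frob_sq k Q / real k)"
  have "m > 0" "k > 0"
    using False by (auto simp: frob_sq_def intro: Nat.gr0I)
  then have "p > 0" "q > 0" and p2: "p\<^sup>2 = frob_sq m P / m" and q2: "q\<^sup>2 = frob_sq k Q / k"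
    using False frob_sq_nonneg[of m P] frob_sq_nonneg[of k Q] by (auto simp: p_def q_def)
  let ?P = "\<lambda>i j. complex_of_real (1 / p) * P i j" and ?Q = "\<lambda>i j. complex_of_real (1 / q) * Q i j"
  have "str m ?P = 0" "str k ?Q = 0"
    using assms by (simp_all add: str_def sum_divide_distrib[symmetric])
  moreover have "sinner m ?P ?P = 1" "sinner k ?Q ?Q = 1"
    unfolding sinner_self frob_sq_scale using \<open>p > 0\<close> \<open>q > 0\<close> \<open>m > 0\<close> \<open>k > 0\<close> False
    by (simp_all add: p2 q2 power_divide)
  ultimately have "cmod (corr m k \<psi> ?P ?Q) \<le> maxcorr m k \<psi>"
    by (rule norm_corr_le_maxcorr)
  moreover have "cmod (corr m k \<psi> ?P ?Q) = cmod (corr m k \<psi> P Q) / (p * q)"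
    unfolding corr_scale using \<open>p > 0\<close> \<open>q > 0\<close> by (simp add: norm_mult norm_divide)
  ultimately show ?thesis
    using \<open>p > 0\<close> \<open>q > 0\<close> by (simp add: p_def[symmetric] q_def[symmetric] divide_le_eq ac_simps)
qed

section \<open>The Markov operator of a single copy\<close>

text \<open>This is T for n = 1; by markov_op_apply, T acts on product operators factorwise
  through it.\<close>

definition single_markov :: "nat \<Rightarrow> nat \<Rightarrow> bmat \<Rightarrow> smat \<Rightarrow> smat" where
  "single_markov m k \<psi> Y = (\<lambda>a' a. of_nat m * (\<Sum>b<k. \<Sum>b'<k. Y b b' * \<psi> (a', b') (a, b)))"

lemma single_markov_sum:
  "single_markov m k \<psi> (\<lambda>b b'. \<Sum>s\<in>D. d s * Y s b b')
    = (\<lambda>a' a. \<Sum>s\<in>D. d s * single_markov m k \<psi> (Y s) a' a)"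
  by (simp add: single_markov_def sum_distrib_left sum_distrib_right sum.swap[where B=D] ac_simps)

lemma str_single_markov:
  assumes "marginal_B_maxmixed m k \<psi>"
  shows "str m (single_markov m k \<psi> Y) = of_nat m / of_nat k * str k Y"
proof -
  have "(\<Sum>a<m. \<Sum>b<k. \<Sum>b'<k. Y b b' * \<psi> (a, b') (a, b))
      = (\<Sum>b<k. \<Sum>b'<k. Y b b' * (\<Sum>a<m. \<psi> (a, b') (a, b)))"
    by (simp add: sum_distrib_left sum.swap[of _ "{..<m}"])
  also have "\<dots> = (\<Sum>b<k. \<Sum>b'<k. Y b b' * (if b' = b then 1 / of_nat k else 0))"
    using assms unfolding marginal_B_maxmixed_def by simp
  also have "\<dots> = str k Y / of_nat k"
    by (simp add: str_def if_distrib sum_divide_distrib cong: if_cong)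
  finally show ?thesis
    by (simp add: single_markov_def str_def sum_distrib_left[symmetric])
qed

lemma single_markov_identity:
  assumes "marginal_A_maxmixed m k \<psi>" and "m > 0" and "std_onb k Bs" and "a < m" and "a' < m"
  shows "single_markov m k \<psi> (Bs 0) a' a = (if a' = a then 1 else 0)"
proof -
  have "(\<Sum>b'<k. Bs 0 b b' * \<psi> (a', b') (a, b)) = (\<Sum>b'<k. if b = b' then \<psi> (a', b) (a, b) else 0)"
    if "b < k" for b
    using that by (intro sum.cong) (auto simp: std_onb_identity[OF assms(3)])
  then have "single_markov m k \<psi> (Bs 0) a' a = of_nat m * (\<Sum>b<k. \<psi> (a', b) (a, b))"
    by (simp add: single_markov_def)
  also have "\<dots> = (if a' = a then 1 else 0)"
    using assms unfolding marginal_A_maxmixed_def by simp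
  finally show ?thesis .
qed

lemma corr_eq_single_markov:
  assumes "m > 0"
  shows "corr m k \<psi> P Y = (\<Sum>a<m. \<Sum>a'<m. cnj (P a' a) * single_markov m k \<psi> Y a' a) / of_nat m"
proof -
  have "corr m k \<psi> P Y = (\<Sum>a<m. \<Sum>a'<m. \<Sum>b<k. \<Sum>b'<k. cnj (P a' a) * Y b b' * \<psi> (a', b') (a, b))"
    unfolding corr_def by (rule sum.cong[OF refl], rule sum.swap)
  then show ?thesis
    using assms unfolding single_markov_def
    by (simp add: sum_distrib_left sum_divide_distrib ac_simps)
qed

text \<open>Test the maximal correlation against P = T_1 Y, for which corr P Y = <T_1 Y, T_1 Y>.\<close>

lemma frob_sq_single_markov_le:
  assumes "marginal_B_maxmixed m k \<psi>" and "m > 0" and "k > 0" and "str k Y = 0"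
  shows "frob_sq m (single_markov m k \<psi> Y) / real m \<le> (maxcorr m k \<psi>)\<^sup>2 * (frob_sq k Y / real k)"
proof -
  let ?X = "single_markov m k \<psi> Y" and ?\<rho> = "maxcorr m k \<psi>"
  define x where "x = sqrt (frob_sq m ?X / real m)"
  define y where "y = sqrt (frob_sq k Y / real k)"
  have x2: "x\<^sup>2 = frob_sq m ?X / real m" and y2: "y\<^sup>2 = frob_sq k Y / real k" and "x \<ge> 0" "y \<ge> 0"
    by (simp_all add: x_def y_def frob_sq_nonneg)
  have "str m ?X = 0"
    using str_single_markov[OF assms(1)] assms(4) by simp
  then have "cmod (corr m k \<psi> ?X Y) \<le> ?\<rho> * x * y"
    unfolding x_def y_def using assms(4) by (rule norm_corr_le_maxcorr_frob)
  moreover have "corr m k \<psi> ?X Y = complex_of_real (x\<^sup>2)"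
    unfolding corr_eq_single_markov[OF assms(2)] x2 by (simp add: frob_sq_def cnj_mult_self)
  then have "cmod (corr m k \<psi> ?X Y) = x * x"
    by (simp add: power2_eq_square norm_mult)
  ultimately have "x * x \<le> ?\<rho> * y * x"
    by (simp add: ac_simps)
  then have "x \<le> ?\<rho> * y"
    using \<open>x \<ge> 0\<close> maxcorr_nonneg[of m k \<psi>] \<open>y \<ge> 0\<close>
    by (cases "x = 0") (simp_all add: mult_le_cancel_right)
  then have "x\<^sup>2 \<le> (?\<rho> * y)\<^sup>2"
    using \<open>x \<ge> 0\<close> by (rule power_mono)
  then show ?thesis by (simp add: x2 y2 power_mult_distrib)
qed

lemma frob_sq_single_markov_nonidentity_le:
  assumes "marginal_B_maxmixed m k \<psi>" and "m > 0" and "k > 0" and onb: "std_onb k Bs"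
  shows "frob_sq m (\<lambda>a' a. \<Sum>s\<in>{1..<k^2}. d s * single_markov m k \<psi> (Bs s) a' a)
    \<le> real m * (maxcorr m k \<psi>)\<^sup>2 * (\<Sum>s\<in>{1..<k^2}. (cmod (d s))\<^sup>2)"
proof -
  define Y where "Y = (\<lambda>b b'. \<Sum>s\<in>{1..<k^2}. d s * Bs s b b')"
  have "str k Y = 0"
    by (simp add: Y_def str_sum str_std_onb_nonidentity[OF onb])
  have "frob_sq k Y = real k * (\<Sum>s\<in>{1..<k^2}. (cmod (d s))\<^sup>2)"
    unfolding Y_def by (rule frob_sq_std_onb_expansion[OF onb]) auto
  then have "frob_sq m (single_markov m k \<psi> Y) / real m
      \<le> (maxcorr m k \<psi>)\<^sup>2 * (\<Sum>s\<in>{1..<k^2}. (cmod (d s))\<^sup>2)"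
    using frob_sq_single_markov_le[OF assms(1-3) \<open>str k Y = 0\<close>] \<open>k > 0\<close> by simp
  then show ?thesis
    using \<open>m > 0\<close> by (simp add: Y_def single_markov_sum field_simps)
qed

lemma frob_sq_single_markov_identity:
  assumes "marginal_A_maxmixed m k \<psi>" and "m > 0" and "std_onb k Bs"
  shows "frob_sq m (\<lambda>a' a. z * single_markov m k \<psi> (Bs 0) a' a) = real m * (cmod z)\<^sup>2"
proof -
  have "(cmod (z * single_markov m k \<psi> (Bs 0) j i))\<^sup>2 = (if j = i then (cmod z)\<^sup>2 else 0)"
    if "i < m" "j < m" for i j
    using single_markov_identity[OF assms that] by simp
  then show ?thesis by (simp add: frob_sq_def)
qed

section \<open>The Markov operator of n copies and Efron-Stein components\<close>

lemma markov_op_apply: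
  assumes "is_markov_op m k n \<psi> T" and "m > 0" and "xs \<in> idx m n" and "ys \<in> idx m n"
  shows "T X xs ys = of_nat (m ^ n) *
    (\<Sum>bs\<in>idx k n. \<Sum>bs'\<in>idx k n. X bs bs' * psi_tensor n \<psi> (xs, bs') (ys, bs))"
proof -
  define M :: nmat where "M = (\<lambda>as' as. if as' = xs \<and> as = ys then 1 else 0)"
  have "pair_trace m k n \<psi> M X = ninner m n M (T X)"
    using assms(1) unfolding is_markov_op_def by blast
  moreover have "(\<Sum>as'\<in>idx m n. \<Sum>bs'\<in>idx k n.
        cnj (M as' as) * X bs bs' * psi_tensor n \<psi> (as', bs') (as, bs))
      = (if as = ys then \<Sum>bs'\<in>idx k n. X bs bs' * psi_tensor n \<psi> (xs, bs') (ys, bs) else 0)"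
    for as bs
    using assms(3) by (subst sum.swap)
      (simp add: M_def if_distrib[of cnj] if_distrib[of "\<lambda>z. z * _"] cong: if_cong)
  then have "pair_trace m k n \<psi> M X
      = (\<Sum>bs\<in>idx k n. \<Sum>bs'\<in>idx k n. X bs bs' * psi_tensor n \<psi> (xs, bs') (ys, bs))"
    using assms(4) unfolding pair_trace_def by (subst sum.swap) simp
  moreover have "ninner m n M (T X) = T X xs ys / of_nat (m ^ n)"
  proof -
    have "(\<Sum>j\<in>idx m n. cnj (M j i) * T X j i) = (if i = ys then T X xs ys else 0)" for i
      using assms(3) by (cases "i = ys")
        (simp_all add: M_def if_distrib[of cnj] if_distrib[of "\<lambda>z. z * _"] cong: if_cong)
    then show ?thesis
      using assms(3,4) by (simp add: ninner_def)
  qed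
  ultimately show ?thesis
    using assms(2) by (simp add: field_simps)
qed

lemma markov_op_tensor_series:
  assumes "is_markov_op m k n \<psi> T" and "m > 0" and "xs \<in> idx m n" and "ys \<in> idx m n"
  shows "T (tensor_series D G c n) xs ys
    = tensor_series D (\<lambda>i s. single_markov m k \<psi> (G i s)) c n xs ys"
proof -
  have "T (tensor_series D G c n) xs ys = (\<Sum>\<sigma>\<in>lists_pi D n. c \<sigma> * (of_nat (m ^ n) *
      (\<Sum>bs\<in>idx k n. \<Sum>bs'\<in>idx k n.
        \<Prod>i<n. G i (\<sigma> ! i) (bs ! i) (bs' ! i) * \<psi> (xs ! i, bs' ! i) (ys ! i, bs ! i))))"
    unfolding markov_op_apply[OF assms] tensor_series_def psi_tensor_def
    by (simp add: sum_distrib_left sum_distrib_right prod.distrib sum.swap[of _ "lists_pi D n"]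
        ac_simps)
  also have "\<dots> = tensor_series D (\<lambda>i s. single_markov m k \<psi> (G i s)) c n xs ys"
    unfolding tensor_series_def
  proof (rule sum.cong[OF refl])
    fix \<sigma>
    show "c \<sigma> * (of_nat (m ^ n) * (\<Sum>bs\<in>idx k n. \<Sum>bs'\<in>idx k n.
        \<Prod>i<n. G i (\<sigma> ! i) (bs ! i) (bs' ! i) * \<psi> (xs ! i, bs' ! i) (ys ! i, bs ! i)))
      = c \<sigma> * (\<Prod>i<n. single_markov m k \<psi> (G i (\<sigma> ! i)) (xs ! i) (ys ! i))"
      unfolding sum_prod_idx2[where f="\<lambda>i b b'. G i (\<sigma> ! i) b b' * \<psi> (xs ! i, b') (ys ! i, b)"]
      by (simp add: single_markov_def prod.distrib)
  qed
  finally show ?thesis .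
qed

definition es_range :: "nat \<Rightarrow> nat set \<Rightarrow> nat \<Rightarrow> nat set" where
  "es_range k S i = (if i \<in> S then {1..<k^2} else {0})"

lemma es_support_eq_lists_pi:
  assumes "S \<subseteq> {..<n}" and "k > 0"
  shows "{\<sigma> \<in> idx (k^2) n. {i. i < n \<and> \<sigma> ! i \<noteq> 0} = S} = lists_pi (es_range k S) n"
  using assms by (auto simp: idx_def lists_pi_def es_range_def all_set_conv_all_nth)

text \<open>The coefficients are arbitrary here, so the THE in fourier_coeff is never unfolded.\<close>

lemma es_comp_eq_tensor_series:
  assumes "S \<subseteq> {..<n}" and "k > 0"
  shows "es_comp k n Bs Q S = tensor_series (es_range k S) (\<lambda>_. Bs) (fourier_coeff k n Bs Q) n"
  unfolding es_comp_def tensor_series_def es_support_eq_lists_pi[OF assms]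
  by (intro ext sum.cong refl) (simp add: basis_prod_def lists_pi_def)

lemma frob_sq_single_markov_es_range:
  assumes "marginal_A_maxmixed m k \<psi>" and "marginal_B_maxmixed m k \<psi>"
    and "m > 0" and "k > 0" and "std_onb k Bs"
  shows "frob_sq m (\<lambda>a' a. \<Sum>s\<in>es_range k S i. d s * single_markov m k \<psi> (Bs s) a' a)
    \<le> real m * (if i \<in> S then (maxcorr m k \<psi>)\<^sup>2 else 1) * (\<Sum>s\<in>es_range k S i. (cmod (d s))\<^sup>2)"
  using frob_sq_single_markov_nonidentity_le[OF assms(2-5)]
    frob_sq_single_markov_identity[OF assms(1,3,5)]
  by (simp add: es_range_def)

theorem proposition3p13:
  fixes n mA mB :: nat and \<psi> :: bmat and T :: "nmat \<Rightarrow> nmat"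
    and Bs :: "nat \<Rightarrow> smat" and Q :: nmat and S :: "nat set"
  assumes "n > 0" and "mA > 0" and "mB > 0"
    and "is_state mA mB \<psi>"
    and "marginal_A_maxmixed mA mB \<psi>" and "marginal_B_maxmixed mA mB \<psi>"
    and "is_markov_op mA mB n \<psi> T"
    and "std_onb mB Bs"
    and "S \<subseteq> {..<n}"
  shows "nnorm2 mA n (T (es_comp mB n Bs Q S))
           \<le> maxcorr mA mB \<psi> ^ card S * nnorm2 mB n (es_comp mB n Bs Q S)"
proof -
  let ?\<rho> = "maxcorr mA mB \<psi>" and ?D = "es_range mB S" and ?c = "fourier_coeff mB n Bs Q"
  let ?C = "\<Sum>\<sigma>\<in>lists_pi ?D n. (cmod (?c \<sigma>))\<^sup>2"
  have X: "es_comp mB n Bs Q S = tensor_series ?D (\<lambda>_. Bs) ?c n"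
    using es_comp_eq_tensor_series[OF assms(9,3)] .
  have fin: "finite (?D i)" for i
    by (simp add: es_range_def)
  have "nfrob_sq mA n (T (es_comp mB n Bs Q S))
      = nfrob_sq mA n (tensor_series ?D (\<lambda>_ s. single_markov mA mB \<psi> (Bs s)) ?c n)"
    unfolding X using markov_op_tensor_series[OF assms(7,2)] by (rule nfrob_sq_cong)
  also have "\<dots> \<le> real mA ^ n * (\<Prod>i<n. if i \<in> S then ?\<rho>\<^sup>2 else 1) * ?C"
    by (rule nfrob_sq_tensor_series_le[OF fin])
      (simp_all add: frob_sq_single_markov_es_range[OF assms(5,6,2,3,8)])
  also have "(\<Prod>i<n. if i \<in> S then ?\<rho>\<^sup>2 else 1) = (?\<rho> ^ card S)\<^sup>2"
    using assms(9) by (simp add: prod.If_cases Int_absorb1 power_mult[symmetric] mult.commute)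
  finally have A: "nfrob_sq mA n (T (es_comp mB n Bs Q S)) / real mA ^ n \<le> (?\<rho> ^ card S)\<^sup>2 * ?C"
    using assms(2) by (simp add: divide_le_eq ac_simps)
  have "nfrob_sq mB n (es_comp mB n Bs Q S) = real mB ^ n * ?C"
    unfolding X using fin frob_sq_std_onb_expansion[OF assms(8)]
    by (rule nfrob_sq_tensor_series_eq) (use assms(3) in \<open>auto simp: es_range_def\<close>)
  then have B: "nfrob_sq mB n (es_comp mB n Bs Q S) / real mB ^ n = ?C"
    using assms(3) by simp
  show ?thesis
    unfolding nnorm2_eq B using real_sqrt_le_mono[OF A] maxcorr_nonneg[of mA mB \<psi>]
    by (simp add: real_sqrt_mult)
qed

end
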